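(* Let $E$ be a contact Riemannian Lie algebroid with associated almost contact Riemannian structure $(F_E,\xi,\eta,g_E)$, and let $\nabla$ be the Levi-Civita connection of $g_E$. Then: (i) $N_E^{(2)}=0$ and $N_E^{(4)}=0$; (ii) $N_E^{(3)}=0$ if and only if $\xi$ is a Killing section, i.e. $\mathcal{L}_\xi g_E=0$; (iii) $\nabla_\xi F_E=0$.
   Context: A Lie algebroid $(E,\rho_E,[\cdot,\cdot]_E)$ over $M$ is a vector bundle with anchor $\rho_E:E\to TM$ and Lie bracket on $\Gamma(E)$ with $[s_1,fs_2]_E=f[s_1,s_2]_E+\rho_E(s_1)(f)s_2$. For a 1-form $\eta$, $(d_E\eta)(s_1,s_2)=\frac12\{\rho_E(s_1)(\eta(s_2))-\rho_E(s_2)(\eta(s_1))-\eta([s_1,s_2]_E)\}$. For $E$ of rank $2m+1$, an almost contact Riemannian structure $(F_E,\xi,\eta,g_E)$: endomorphism $F_E$, $\xi\in\Gamma(E)$, $\eta\in\Gamma(E^* )$, bundle metric $g_E$, with $F_E^2=-I_E+\eta\otimes\xi$, $\eta(\xi)=1$, $g_E(F_Es_1,F_Es_2)=g_E(s_1,s_2)-\eta(s_1)\eta(s_2)$; fundamental form $\Omega_E(s_1,s_2)=g_E(s_1,F_Es_2)$. $E$ is contact Riemannian if also $\eta\wedge(d_E\eta)^m$ vanishes nowhere and $d_E\eta=\Omega_E$. Lie derivatives along $s\in\Gamma(E)$: $(\mathcal{L}_s\eta)(s')=\rho_E(s)(\eta(s'))-\eta([s,s']_E)$; $(\mathcal{L}_sF_E)(s')=[s,F_Es']_E-F_E[s,s']_E$;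 $(\mathcal{L}_sg_E)(s_1,s_2)=\rho_E(s)(g_E(s_1,s_2))-g_E([s,s_1]_E,s_2)-g_E(s_1,[s,s_2]_E)$. Define $N_E^{(2)}(s_1,s_2)=(\mathcal{L}_{F_E(s_1)}\eta)(s_2)-(\mathcal{L}_{F_E(s_2)}\eta)(s_1)$, $N_E^{(3)}=\frac12\mathcal{L}_\xi F_E$, $N_E^{(4)}=\mathcal{L}_\xi\eta$. The Levi-Civita connection $\nabla$ is the unique $E$-connection ($\nabla_{fs}s'=f\nabla_ss'$, $\nabla_s(fs')=f\nabla_ss'+\rho_E(s)(f)s'$) that is torsion-free ($\nabla_{s_1}s_2-\nabla_{s_2}s_1=[s_1,s_2]_E$) and metric ($\rho_E(s)(g_E(s_1,s_2))=g_E(\nabla_ss_1,s_2)+g_E(s_1,\nabla_ss_2)$); $(\nabla_sF_E)s'=\nabla_s(F_Es')-F_E(\nabla_ss')$. *)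

theory Defs
  imports Complex_Main "HOL-Combinatorics.Permutations"
begin

text \<open>The base manifold M is the type 'm. The vector bundle E is given by
 its fibres Efib x, subspaces of a fixed real vector space 'v (every vector bundle
 embeds in a trivial bundle). Smooth functions form the set C of real functions on M;
 smooth sections form the set Sec of maps s with s x in Efib x.
 The anchor is given pointwise: rho x v is the tangent vector (a derivation at x
 on the smooth functions) which is the image of v in Efib x.\<close>

definition smul :: "('m \<Rightarrow> real) \<Rightarrow> ('m \<Rightarrow> 'v::real_vector) \<Rightarrow> 'm \<Rightarrow> 'v" where
  "smul f s = (\<lambda>x. f x *\<^sub>R s x)"

definition anc :: "('m \<Rightarrow> 'v \<Rightarrow> ('m \<Rightarrow> real) \<Rightarrow> real) \<Rightarrow> ('m \<Rightarrow> 'v) \<Rightarrow> ('m \<Rightarrow> real) \<Rightarrow> 'm \<Rightarrow> real" where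
  "anc rho s f = (\<lambda>x. rho x (s x) f)"

definition vector_bundle ::
  "('m \<Rightarrow> real) set \<Rightarrow> ('m \<Rightarrow> 'v::real_vector set) \<Rightarrow> ('m \<Rightarrow> 'v) set \<Rightarrow> nat \<Rightarrow> bool" where
  "vector_bundle C Efib Sec n \<longleftrightarrow>
     (\<forall>c. (\<lambda>_. c) \<in> C) \<and>
     (\<forall>f\<in>C. \<forall>g\<in>C. (\<lambda>x. f x + g x) \<in> C \<and> (\<lambda>x. f x * g x) \<in> C) \<and>
     (\<forall>x. subspace (Efib x) \<and> dim (Efib x) = n) \<and>
     (\<forall>s\<in>Sec. \<forall>x. s x \<in> Efib x) \<and>
     (\<lambda>_. 0) \<in> Sec \<and>
     (\<forall>s\<in>Sec. \<forall>s'\<in>Sec. (\<lambda>x. s x + s' x) \<in> Sec) \<and>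
     (\<forall>f\<in>C. \<forall>s\<in>Sec. smul f s \<in> Sec) \<and>
     (\<forall>x. \<forall>v\<in>Efib x. \<exists>s\<in>Sec. s x = v)"

definition lie_algebroid ::
  "('m \<Rightarrow> real) set \<Rightarrow> ('m \<Rightarrow> 'v::real_vector set) \<Rightarrow> ('m \<Rightarrow> 'v) set \<Rightarrow> nat
   \<Rightarrow> ('m \<Rightarrow> 'v \<Rightarrow> ('m \<Rightarrow> real) \<Rightarrow> real)
   \<Rightarrow> (('m \<Rightarrow> 'v) \<Rightarrow> ('m \<Rightarrow> 'v) \<Rightarrow> ('m \<Rightarrow> 'v)) \<Rightarrow> bool" where
  "lie_algebroid C Efib Sec n rho br \<longleftrightarrow>
     vector_bundle C Efib Sec n \<and>
     \<comment> \<open>anchor: fibrewise linear bundle map into tangent vectors (derivations at x)\<close>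
     (\<forall>x. \<forall>v\<in>Efib x. \<forall>w\<in>Efib x. \<forall>a. \<forall>f\<in>C.
         rho x (a *\<^sub>R v + w) f = a * rho x v f + rho x w f) \<and>
     (\<forall>x. \<forall>v\<in>Efib x. \<forall>f\<in>C. \<forall>g\<in>C. \<forall>a.
         rho x v (\<lambda>y. a * f y + g y) = a * rho x v f + rho x v g \<and>
         rho x v (\<lambda>y. f y * g y) = f x * rho x v g + g x * rho x v f) \<and>
     (\<forall>s\<in>Sec. \<forall>f\<in>C. anc rho s f \<in> C) \<and>
     \<comment> \<open>bracket: real Lie bracket on sections with the Leibniz rule\<close>
     (\<forall>s1\<in>Sec. \<forall>s2\<in>Sec. br s1 s2 \<in> Sec) \<and>
     (\<forall>s1\<in>Sec. \<forall>s2\<in>Sec. \<forall>s3\<in>Sec. \<forall>a.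
         br (\<lambda>x. a *\<^sub>R s1 x + s2 x) s3 = (\<lambda>x. a *\<^sub>R br s1 s3 x + br s2 s3 x)) \<and>
     (\<forall>s1\<in>Sec. \<forall>s2\<in>Sec. br s1 s2 = (\<lambda>x. - br s2 s1 x)) \<and>
     (\<forall>s1\<in>Sec. \<forall>s2\<in>Sec. \<forall>s3\<in>Sec.
         (\<lambda>x. br s1 (br s2 s3) x + br s2 (br s3 s1) x + br s3 (br s1 s2) x) = (\<lambda>_. 0)) \<and>
     (\<forall>s1\<in>Sec. \<forall>s2\<in>Sec. \<forall>f\<in>C.
         br s1 (smul f s2) = (\<lambda>x. f x *\<^sub>R br s1 s2 x + anc rho s1 f x *\<^sub>R s2 x))"

definition almost_contact_riemannian ::
  "('m \<Rightarrow> real) set \<Rightarrow> ('m \<Rightarrow> 'v::real_vector set) \<Rightarrow> ('m \<Rightarrow> 'v) set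
   \<Rightarrow> ('m \<Rightarrow> 'v \<Rightarrow> 'v) \<Rightarrow> ('m \<Rightarrow> 'v) \<Rightarrow> ('m \<Rightarrow> 'v \<Rightarrow> real) \<Rightarrow> ('m \<Rightarrow> 'v \<Rightarrow> 'v \<Rightarrow> real) \<Rightarrow> bool" where
  "almost_contact_riemannian C Efib Sec F xi eta g \<longleftrightarrow>
     \<comment> \<open>smooth tensor fields\<close>
     (\<forall>x. \<forall>v\<in>Efib x. \<forall>w\<in>Efib x. \<forall>a.
        F x v \<in> Efib x \<and> F x (a *\<^sub>R v + w) = a *\<^sub>R F x v + F x w \<and>
        eta x (a *\<^sub>R v + w) = a * eta x v + eta x w \<and>
        (\<forall>u\<in>Efib x. g x (a *\<^sub>R v + w) u = a * g x v u + g x w u) \<and>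
        g x v w = g x w v) \<and>
     (\<forall>x. \<forall>v\<in>Efib x. v \<noteq> 0 \<longrightarrow> g x v v > 0) \<and>
     xi \<in> Sec \<and>
     (\<forall>s\<in>Sec. (\<lambda>x. F x (s x)) \<in> Sec \<and> (\<lambda>x. eta x (s x)) \<in> C) \<and>
     (\<forall>s1\<in>Sec. \<forall>s2\<in>Sec. (\<lambda>x. g x (s1 x) (s2 x)) \<in> C) \<and>
     \<comment> \<open>the almost contact metric identities\<close>
     (\<forall>x. \<forall>v\<in>Efib x. F x (F x v) = - v + eta x v *\<^sub>R xi x) \<and>
     (\<forall>x. eta x (xi x) = 1) \<and>
     (\<forall>x. \<forall>v\<in>Efib x. \<forall>w\<in>Efib x. g x (F x v) (F x w) = g x v w - eta x v * eta x w)"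

definition fundamental_form :: "('m \<Rightarrow> 'v \<Rightarrow> 'v) \<Rightarrow> ('m \<Rightarrow> 'v \<Rightarrow> 'v \<Rightarrow> real) \<Rightarrow> 'm \<Rightarrow> 'v \<Rightarrow> 'v \<Rightarrow> real" where
  "fundamental_form F g x v w = g x v (F x w)"

text \<open>Exterior derivative of a 1-form on sections (with the paper's factor 1/2).\<close>
definition dE :: "('m \<Rightarrow> 'v \<Rightarrow> ('m \<Rightarrow> real) \<Rightarrow> real) \<Rightarrow> (('m \<Rightarrow> 'v) \<Rightarrow> ('m \<Rightarrow> 'v) \<Rightarrow> ('m \<Rightarrow> 'v))
   \<Rightarrow> ('m \<Rightarrow> 'v \<Rightarrow> real) \<Rightarrow> ('m \<Rightarrow> 'v) \<Rightarrow> ('m \<Rightarrow> 'v) \<Rightarrow> 'm \<Rightarrow> real" where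
  "dE rho br eta s1 s2 = (\<lambda>x. (1/2) * (anc rho s1 (\<lambda>y. eta y (s2 y)) x
       - anc rho s2 (\<lambda>y. eta y (s1 y)) x - eta x (br s1 s2 x)))"

text \<open>The (2m+1)-form eta /\ (d eta)^m evaluated on sections ss 0, ..., ss (2m), as the
 total alternation of eta (x) d eta (x) ... (x) d eta; this agrees with the wedge product
 up to a positive constant factor (irrelevant for vanishing).\<close>
definition eta_wedge_deta_pow ::
  "('m \<Rightarrow> 'v \<Rightarrow> ('m \<Rightarrow> real) \<Rightarrow> real) \<Rightarrow> (('m \<Rightarrow> 'v) \<Rightarrow> ('m \<Rightarrow> 'v) \<Rightarrow> ('m \<Rightarrow> 'v))
   \<Rightarrow> ('m \<Rightarrow> 'v \<Rightarrow> real) \<Rightarrow> nat \<Rightarrow> (nat \<Rightarrow> ('m \<Rightarrow> 'v)) \<Rightarrow> 'm \<Rightarrow> real" where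
  "eta_wedge_deta_pow rho br eta m ss = (\<lambda>x.
     \<Sum>p\<in>{p. p permutes {..<2*m+1}}. of_int (sign p) * eta x (ss (p 0) x) *
        (\<Prod>i<m. dE rho br eta (ss (p (2*i+1))) (ss (p (2*i+2))) x))"

definition contact_riemannian ::
  "('m \<Rightarrow> real) set \<Rightarrow> ('m \<Rightarrow> 'v::real_vector set) \<Rightarrow> ('m \<Rightarrow> 'v) set \<Rightarrow> nat
   \<Rightarrow> ('m \<Rightarrow> 'v \<Rightarrow> ('m \<Rightarrow> real) \<Rightarrow> real) \<Rightarrow> (('m \<Rightarrow> 'v) \<Rightarrow> ('m \<Rightarrow> 'v) \<Rightarrow> ('m \<Rightarrow> 'v))
   \<Rightarrow> ('m \<Rightarrow> 'v \<Rightarrow> 'v) \<Rightarrow> ('m \<Rightarrow> 'v) \<Rightarrow> ('m \<Rightarrow> 'v \<Rightarrow> real) \<Rightarrow> ('m \<Rightarrow> 'v \<Rightarrow> 'v \<Rightarrow> real) \<Rightarrow> bool" where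
  "contact_riemannian C Efib Sec m rho br F xi eta g \<longleftrightarrow>
     lie_algebroid C Efib Sec (2*m+1) rho br \<and>
     almost_contact_riemannian C Efib Sec F xi eta g \<and>
     (\<forall>x. \<exists>ss. (\<forall>i<2*m+1. ss i \<in> Sec) \<and> eta_wedge_deta_pow rho br eta m ss x \<noteq> 0) \<and>
     (\<forall>s1\<in>Sec. \<forall>s2\<in>Sec. dE rho br eta s1 s2 = (\<lambda>x. fundamental_form F g x (s1 x) (s2 x)))"

definition lie_eta :: "('m \<Rightarrow> 'v \<Rightarrow> ('m \<Rightarrow> real) \<Rightarrow> real) \<Rightarrow> (('m \<Rightarrow> 'v) \<Rightarrow> ('m \<Rightarrow> 'v) \<Rightarrow> ('m \<Rightarrow> 'v))
   \<Rightarrow> ('m \<Rightarrow> 'v \<Rightarrow> real) \<Rightarrow> ('m \<Rightarrow> 'v) \<Rightarrow> ('m \<Rightarrow> 'v) \<Rightarrow> 'm \<Rightarrow> real" where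
  "lie_eta rho br eta s s' = (\<lambda>x. anc rho s (\<lambda>y. eta y (s' y)) x - eta x (br s s' x))"

definition lie_F :: "(('m \<Rightarrow> 'v::real_vector) \<Rightarrow> ('m \<Rightarrow> 'v) \<Rightarrow> ('m \<Rightarrow> 'v))
   \<Rightarrow> ('m \<Rightarrow> 'v \<Rightarrow> 'v) \<Rightarrow> ('m \<Rightarrow> 'v) \<Rightarrow> ('m \<Rightarrow> 'v) \<Rightarrow> 'm \<Rightarrow> 'v" where
  "lie_F br F s s' = (\<lambda>x. br s (\<lambda>y. F y (s' y)) x - F x (br s s' x))"

definition lie_g :: "('m \<Rightarrow> 'v \<Rightarrow> ('m \<Rightarrow> real) \<Rightarrow> real) \<Rightarrow> (('m \<Rightarrow> 'v) \<Rightarrow> ('m \<Rightarrow> 'v) \<Rightarrow> ('m \<Rightarrow> 'v))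
   \<Rightarrow> ('m \<Rightarrow> 'v \<Rightarrow> 'v \<Rightarrow> real) \<Rightarrow> ('m \<Rightarrow> 'v) \<Rightarrow> ('m \<Rightarrow> 'v) \<Rightarrow> ('m \<Rightarrow> 'v) \<Rightarrow> 'm \<Rightarrow> real" where
  "lie_g rho br g s s1 s2 = (\<lambda>x. anc rho s (\<lambda>y. g y (s1 y) (s2 y)) x
       - g x (br s s1 x) (s2 x) - g x (s1 x) (br s s2 x))"

definition N2 where
  "N2 rho br F eta s1 s2 = (\<lambda>x. lie_eta rho br eta (\<lambda>y. F y (s1 y)) s2 x
                              - lie_eta rho br eta (\<lambda>y. F y (s2 y)) s1 x)"

definition N3 where
  "N3 br F xi s = (\<lambda>x. (1/2::real) *\<^sub>R lie_F br F xi s x)"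

definition N4 where
  "N4 rho br eta xi s = lie_eta rho br eta xi s"

definition E_connection ::
  "('m \<Rightarrow> real) set \<Rightarrow> ('m \<Rightarrow> 'v::real_vector) set \<Rightarrow> ('m \<Rightarrow> 'v \<Rightarrow> ('m \<Rightarrow> real) \<Rightarrow> real)
   \<Rightarrow> (('m \<Rightarrow> 'v) \<Rightarrow> ('m \<Rightarrow> 'v) \<Rightarrow> ('m \<Rightarrow> 'v)) \<Rightarrow> bool" where
  "E_connection C Sec rho nabla \<longleftrightarrow>
     (\<forall>s\<in>Sec. \<forall>s'\<in>Sec. nabla s s' \<in> Sec) \<and>
     (\<forall>s1\<in>Sec. \<forall>s2\<in>Sec. \<forall>s\<in>Sec.
        nabla (\<lambda>x. s1 x + s2 x) s = (\<lambda>x. nabla s1 s x + nabla s2 s x) \<and>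
        nabla s (\<lambda>x. s1 x + s2 x) = (\<lambda>x. nabla s s1 x + nabla s s2 x)) \<and>
     (\<forall>f\<in>C. \<forall>s\<in>Sec. \<forall>s'\<in>Sec.
        nabla (smul f s) s' = smul f (nabla s s') \<and>
        nabla s (smul f s') = (\<lambda>x. f x *\<^sub>R nabla s s' x + anc rho s f x *\<^sub>R s' x))"

definition levi_civita where
  "levi_civita C Sec rho br g nabla \<longleftrightarrow>
     E_connection C Sec rho nabla \<and>
     (\<forall>s1\<in>Sec. \<forall>s2\<in>Sec. (\<lambda>x. nabla s1 s2 x - nabla s2 s1 x) = br s1 s2) \<and>
     (\<forall>s\<in>Sec. \<forall>s1\<in>Sec. \<forall>s2\<in>Sec.
        anc rho s (\<lambda>y. g y (s1 y) (s2 y))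
          = (\<lambda>x. g x (nabla s s1 x) (s2 x) + g x (s1 x) (nabla s s2 x)))"

definition nabla_F where
  "nabla_F nabla F s s' = (\<lambda>x. nabla s (\<lambda>y. F y (s' y)) x - F x (nabla s s' x))"

end

theory Submission
  imports Defs
begin

text \<open>Write \<open>A(Y, W) = g(\<nabla>\<^sub>Y\<xi>, W)\<close> (\<open>nabla_xi_form\<close>). The contact condition
  \<open>d\<eta> = \<Phi>\<close>, evaluated with the Levi-Civita connection, says that
  \<open>A(Y, W) - A(W, Y) = 2 g(Y, FW)\<close>; evaluated on \<open>(FY, Z)\<close> and \<open>(\<xi>, Z)\<close>, using \<open>\<eta> \<circ> F = 0\<close> and \<open>\<eta>(\<xi>) = 1\<close>, it gives \<open>N2 = 0\<close> and \<open>\<L>\<^sub>\<xi>\<eta> = 0\<close>.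
  Since the anchor is a bracket homomorphism, \<open>\<L>\<^sub>\<xi>\<eta> = 0\<close> implies \<open>\<L>\<^sub>\<xi>\<Phi> = \<L>\<^sub>\<xi>d\<eta> = 0\<close>, which
  expresses \<open>g(Y, (\<nabla>\<^sub>\<xi>F)Z)\<close> through \<open>A\<close>. Differentiating \<open>F\<^sup>2 = -I + \<eta> \<otimes> \<xi>\<close> along \<open>\<xi>\<close>
  (where \<open>\<nabla>\<^sub>\<xi>\<xi> = 0\<close>) gives a second such relation, and together they force \<open>\<nabla>\<^sub>\<xi>F = 0\<close>.
  Then \<open>g(Y, (\<L>\<^sub>\<xi>F)Z) = -(\<L>\<^sub>\<xi>g)(FY, Z)\<close> with \<open>(\<L>\<^sub>\<xi>g)(Y, Z) = A(Y, Z) + A(Z, Y)\<close>, and the relations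
  for \<open>A\<close> show that \<open>\<L>\<^sub>\<xi>g\<close> vanishes as soon as it vanishes on the pairs \<open>(FY, Z)\<close>.\<close>

locale vector_bundle_sections =
  fixes C :: "('m \<Rightarrow> real) set"
    and Efib :: "'m \<Rightarrow> 'v::real_vector set"
    and Sec :: "('m \<Rightarrow> 'v) set"
    and n :: nat
  assumes vector_bundle: "vector_bundle C Efib Sec n"
begin

lemma C_const: "(\<lambda>_. c) \<in> C"
  using vector_bundle unfolding vector_bundle_def by (elim conjE) blast

lemma C_add: "f \<in> C \<Longrightarrow> h \<in> C \<Longrightarrow> (\<lambda>x. f x + h x) \<in> C"
  using vector_bundle unfolding vector_bundle_def by (elim conjE) blast

lemma C_mult: "f \<in> C \<Longrightarrow> h \<in> C \<Longrightarrow> (\<lambda>x. f x * h x) \<in> C"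
  using vector_bundle unfolding vector_bundle_def by (elim conjE) blast

lemma C_uminus: "f \<in> C \<Longrightarrow> (\<lambda>x. - f x) \<in> C"
  using C_mult[OF C_const[of "-1"]] by simp

lemma C_diff: "f \<in> C \<Longrightarrow> h \<in> C \<Longrightarrow> (\<lambda>x. f x - h x) \<in> C"
  using C_add[OF _ C_uminus] by simp

lemma fibre_subspace: "subspace (Efib x)"
  using vector_bundle unfolding vector_bundle_def by (elim conjE) blast

lemma fibre_0: "0 \<in> Efib x"
  using fibre_subspace subspace_0 by blast

lemma fibre_add: "v \<in> Efib x \<Longrightarrow> w \<in> Efib x \<Longrightarrow> v + w \<in> Efib x"
  using fibre_subspace subspace_add by blast

lemma fibre_scaleR: "v \<in> Efib x \<Longrightarrow> a *\<^sub>R v \<in> Efib x"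
  using fibre_subspace subspace_scale by blast

lemma fibre_uminus: "v \<in> Efib x \<Longrightarrow> - v \<in> Efib x"
  using fibre_subspace subspace_neg by blast

lemma fibre_diff: "v \<in> Efib x \<Longrightarrow> w \<in> Efib x \<Longrightarrow> v - w \<in> Efib x"
  using fibre_subspace subspace_diff by blast

lemma Sec_fibre: "s \<in> Sec \<Longrightarrow> s x \<in> Efib x"
  using vector_bundle unfolding vector_bundle_def by (elim conjE) blast

lemma Sec_zero: "(\<lambda>_. 0) \<in> Sec"
  using vector_bundle unfolding vector_bundle_def by (elim conjE) blast

lemma Sec_add: "s \<in> Sec \<Longrightarrow> s' \<in> Sec \<Longrightarrow> (\<lambda>x. s x + s' x) \<in> Sec"
  using vector_bundle unfolding vector_bundle_def by (elim conjE) blast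

lemma Sec_smul: "f \<in> C \<Longrightarrow> s \<in> Sec \<Longrightarrow> smul f s \<in> Sec"
  using vector_bundle unfolding vector_bundle_def by (elim conjE) blast

lemma Sec_uminus: "s \<in> Sec \<Longrightarrow> (\<lambda>x. - s x) \<in> Sec"
  using Sec_smul[OF C_const[of "-1"]] by (simp add: smul_def)

lemma Sec_through: "v \<in> Efib x \<Longrightarrow> \<exists>s\<in>Sec. s x = v"
  using vector_bundle unfolding vector_bundle_def by (elim conjE) blast

end

locale almost_contact_metric_bundle = vector_bundle_sections C Efib Sec n
  for C :: "('m \<Rightarrow> real) set"
    and Efib :: "'m \<Rightarrow> 'v::real_vector set"
    and Sec :: "('m \<Rightarrow> 'v) set"
    and n :: nat +
  fixes F :: "'m \<Rightarrow> 'v \<Rightarrow> 'v" and xi :: "'m \<Rightarrow> 'v"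
    and eta :: "'m \<Rightarrow> 'v \<Rightarrow> real" and g :: "'m \<Rightarrow> 'v \<Rightarrow> 'v \<Rightarrow> real"
  assumes almost_contact: "almost_contact_riemannian C Efib Sec F xi eta g"
begin

lemma F_fibre: "v \<in> Efib x \<Longrightarrow> F x v \<in> Efib x"
  using almost_contact by (simp add: almost_contact_riemannian_def)

lemma F_linear: "v \<in> Efib x \<Longrightarrow> w \<in> Efib x \<Longrightarrow> F x (a *\<^sub>R v + w) = a *\<^sub>R F x v + F x w"
  using almost_contact by (simp add: almost_contact_riemannian_def)

lemma eta_linear: "v \<in> Efib x \<Longrightarrow> w \<in> Efib x \<Longrightarrow> eta x (a *\<^sub>R v + w) = a * eta x v + eta x w"
  using almost_contact by (simp add: almost_contact_riemannian_def)

lemma g_linear_left: "v \<in> Efib x \<Longrightarrow> w \<in> Efib x \<Longrightarrow> u \<in> Efib x \<Longrightarrow>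
    g x (a *\<^sub>R v + w) u = a * g x v u + g x w u"
  using almost_contact by (simp add: almost_contact_riemannian_def)

lemma g_sym: "v \<in> Efib x \<Longrightarrow> w \<in> Efib x \<Longrightarrow> g x v w = g x w v"
  using almost_contact by (simp add: almost_contact_riemannian_def)

lemma g_pos: "v \<in> Efib x \<Longrightarrow> v \<noteq> 0 \<Longrightarrow> g x v v > 0"
  using almost_contact by (simp add: almost_contact_riemannian_def)

lemma xi_Sec: "xi \<in> Sec"
  using almost_contact by (simp add: almost_contact_riemannian_def)

lemma F_Sec: "s \<in> Sec \<Longrightarrow> (\<lambda>x. F x (s x)) \<in> Sec"
  using almost_contact by (simp add: almost_contact_riemannian_def)

lemma eta_C: "s \<in> Sec \<Longrightarrow> (\<lambda>x. eta x (s x)) \<in> C"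
  using almost_contact by (simp add: almost_contact_riemannian_def)

lemma g_C: "s1 \<in> Sec \<Longrightarrow> s2 \<in> Sec \<Longrightarrow> (\<lambda>x. g x (s1 x) (s2 x)) \<in> C"
  using almost_contact by (simp add: almost_contact_riemannian_def)

lemma F_F: "v \<in> Efib x \<Longrightarrow> F x (F x v) = - v + eta x v *\<^sub>R xi x"
  using almost_contact by (simp add: almost_contact_riemannian_def)

lemma eta_xi: "eta x (xi x) = 1"
  using almost_contact by (simp add: almost_contact_riemannian_def)

lemma g_F_F: "v \<in> Efib x \<Longrightarrow> w \<in> Efib x \<Longrightarrow> g x (F x v) (F x w) = g x v w - eta x v * eta x w"
  using almost_contact by (simp add: almost_contact_riemannian_def)

lemma F_add: "v \<in> Efib x \<Longrightarrow> w \<in> Efib x \<Longrightarrow> F x (v + w) = F x v + F x w"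
  using F_linear[of v x w 1] by simp

lemma F_scaleR: "v \<in> Efib x \<Longrightarrow> F x (a *\<^sub>R v) = a *\<^sub>R F x v"
  using F_linear[of v x 0 a] F_linear[of 0 x 0 1] fibre_0 by simp

lemma F_uminus: "v \<in> Efib x \<Longrightarrow> F x (- v) = - F x v"
  using F_scaleR[of v x "-1"] by simp

lemma F_diff: "v \<in> Efib x \<Longrightarrow> w \<in> Efib x \<Longrightarrow> F x (v - w) = F x v - F x w"
  using F_add[of v x "- w"] F_uminus[of w x] fibre_uminus by simp

lemma eta_add: "v \<in> Efib x \<Longrightarrow> w \<in> Efib x \<Longrightarrow> eta x (v + w) = eta x v + eta x w"
  using eta_linear[of v x w 1] by simp

lemma eta_scaleR: "v \<in> Efib x \<Longrightarrow> eta x (a *\<^sub>R v) = a * eta x v"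
  using eta_linear[of v x 0 a] eta_linear[of 0 x 0 1] fibre_0 by simp

lemma eta_diff: "v \<in> Efib x \<Longrightarrow> w \<in> Efib x \<Longrightarrow> eta x (v - w) = eta x v - eta x w"
  using eta_add[of v x "- w"] eta_scaleR[of w x "-1"] fibre_uminus by simp

lemma g_add_left: "v \<in> Efib x \<Longrightarrow> w \<in> Efib x \<Longrightarrow> u \<in> Efib x \<Longrightarrow> g x (v + w) u = g x v u + g x w u"
  using g_linear_left[of v x w u 1] by simp

lemma g_scaleR_left: "v \<in> Efib x \<Longrightarrow> u \<in> Efib x \<Longrightarrow> g x (a *\<^sub>R v) u = a * g x v u"
  using g_linear_left[of v x 0 u a] g_linear_left[of 0 x 0 u 1] fibre_0 by simp

lemma g_diff_left: "v \<in> Efib x \<Longrightarrow> w \<in> Efib x \<Longrightarrow> u \<in> Efib x \<Longrightarrow> g x (v - w) u = g x v u - g x w u"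
  using g_add_left[of v x "- w" u] g_scaleR_left[of w x u "-1"] fibre_uminus by simp

lemma g_add_right: "v \<in> Efib x \<Longrightarrow> w \<in> Efib x \<Longrightarrow> u \<in> Efib x \<Longrightarrow> g x u (v + w) = g x u v + g x u w"
  using g_add_left[of v x w u] g_sym fibre_add by metis

lemma g_scaleR_right: "v \<in> Efib x \<Longrightarrow> u \<in> Efib x \<Longrightarrow> g x u (a *\<^sub>R v) = a * g x u v"
  using g_scaleR_left[of v x u a] g_sym fibre_scaleR by metis

lemma g_diff_right: "v \<in> Efib x \<Longrightarrow> w \<in> Efib x \<Longrightarrow> u \<in> Efib x \<Longrightarrow> g x u (v - w) = g x u v - g x u w"
  using g_diff_left[of v x w u] g_sym fibre_diff by metis

lemma g_zero_left: "u \<in> Efib x \<Longrightarrow> g x 0 u = 0"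
  using g_scaleR_left[of 0 x u 0] fibre_0 by simp

lemma g_zero_right: "u \<in> Efib x \<Longrightarrow> g x u 0 = 0"
  using g_scaleR_right[of 0 x u 0] fibre_0 by simp

lemma g_nondegenerate:
  assumes v: "v \<in> Efib x" and orth: "\<And>s. s \<in> Sec \<Longrightarrow> g x (s x) v = 0"
  shows "v = 0"
proof (rule ccontr)
  assume "v \<noteq> 0"
  moreover obtain s where "s \<in> Sec" "s x = v" using Sec_through v by blast
  ultimately show False using g_pos[OF v] orth by force
qed

lemma xi_fibre: "xi x \<in> Efib x"
  using Sec_fibre xi_Sec by blast

lemma xi_nonzero: "xi x \<noteq> 0"
  using eta_xi[of x] eta_scaleR[OF fibre_0, of x 0] by force

lemma F_xi: "F x (xi x) = 0"
proof -
  define c where "c = eta x (F x (xi x))"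
  have FFxi: "F x (F x (xi x)) = 0"
    using F_F[OF xi_fibre] eta_xi by simp
  then have "F x (F x (F x (xi x))) = 0"
    using F_scaleR[OF fibre_0, of x 0] by simp
  then have "F x (xi x) = c *\<^sub>R xi x"
    using F_F[OF F_fibre[OF xi_fibre[of x]]] by (simp add: c_def algebra_simps)
  moreover from this have "(c * c) *\<^sub>R xi x = 0"
    using FFxi F_scaleR[OF xi_fibre, of x c] by simp
  ultimately show ?thesis using xi_nonzero by simp
qed

lemma eta_F: assumes v: "v \<in> Efib x" shows "eta x (F x v) = 0"
proof -
  have "F x (F x (F x v)) = - F x v"
    using F_F[OF v] F_add[OF fibre_uminus[OF v] fibre_scaleR[OF xi_fibre]] F_uminus[OF v]
      F_scaleR[OF xi_fibre] F_xi by simp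
  then have "eta x (F x v) *\<^sub>R xi x = 0"
    using F_F[OF F_fibre[OF v]] by simp
  then show ?thesis using xi_nonzero by simp
qed

lemma g_xi_left: assumes v: "v \<in> Efib x" shows "g x (xi x) v = eta x v"
  using g_F_F[OF xi_fibre v] F_xi eta_xi g_zero_left[OF F_fibre[OF v]] by simp

lemma g_xi_right: assumes v: "v \<in> Efib x" shows "g x v (xi x) = eta x v"
  using g_xi_left[OF v] g_sym[OF v xi_fibre] by simp

lemma g_xi_xi: "g x (xi x) (xi x) = 1"
  using g_xi_left[OF xi_fibre] eta_xi by simp

lemma g_F_F_right: assumes v: "v \<in> Efib x" and w: "w \<in> Efib x"
  shows "g x v (F x (F x w)) = - g x v w + eta x v * eta x w"
  using F_F[OF w] g_add_right[OF fibre_uminus[OF w] fibre_scaleR[OF xi_fibre] v]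
    g_scaleR_right[OF fibre_uminus[OF w] v, of "-1"] g_scaleR_right[OF xi_fibre v] g_xi_right[OF v]
  by simp

lemma g_F_skew: assumes v: "v \<in> Efib x" and w: "w \<in> Efib x"
  shows "g x v (F x w) = - g x (F x v) w"
  using g_F_F[OF v F_fibre[OF w]] g_F_F_right[OF F_fibre[OF v] w] eta_F[OF v] eta_F[OF w] by simp

end

locale lie_algebroid_sections =
  fixes C :: "('m \<Rightarrow> real) set"
    and Efib :: "'m \<Rightarrow> 'v::real_vector set"
    and Sec :: "('m \<Rightarrow> 'v) set"
    and n :: nat
    and rho :: "'m \<Rightarrow> 'v \<Rightarrow> ('m \<Rightarrow> real) \<Rightarrow> real"
    and br :: "('m \<Rightarrow> 'v) \<Rightarrow> ('m \<Rightarrow> 'v) \<Rightarrow> ('m \<Rightarrow> 'v)"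
  assumes lie_algebroid: "lie_algebroid C Efib Sec n rho br"

sublocale lie_algebroid_sections \<subseteq> vector_bundle_sections C Efib Sec n
  using lie_algebroid by unfold_locales (simp add: lie_algebroid_def)

context lie_algebroid_sections
begin

lemma anc_apply: "anc rho s f x = rho x (s x) f"
  by (simp add: anc_def)

lemma rho_linear_vector:
  "v \<in> Efib x \<Longrightarrow> w \<in> Efib x \<Longrightarrow> f \<in> C \<Longrightarrow> rho x (a *\<^sub>R v + w) f = a * rho x v f + rho x w f"
  using lie_algebroid unfolding lie_algebroid_def by (elim conjE) blast

lemma rho_zero_vector: "f \<in> C \<Longrightarrow> rho x 0 f = 0"
  using rho_linear_vector[OF fibre_0 fibre_0, of f x 1] by simp

lemma rho_linear:
  "v \<in> Efib x \<Longrightarrow> f \<in> C \<Longrightarrow> h \<in> C \<Longrightarrow> rho x v (\<lambda>y. a * f y + h y) = a * rho x v f + rho x v h"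
  using lie_algebroid unfolding lie_algebroid_def by (elim conjE) blast

lemma rho_mult:
  "v \<in> Efib x \<Longrightarrow> f \<in> C \<Longrightarrow> h \<in> C \<Longrightarrow> rho x v (\<lambda>y. f y * h y) = f x * rho x v h + h x * rho x v f"
  using lie_algebroid unfolding lie_algebroid_def by (elim conjE) blast

lemma rho_const: assumes v: "v \<in> Efib x" shows "rho x v (\<lambda>_. c) = 0"
proof -
  have "rho x v (\<lambda>_. 0) = 0"
    using rho_mult[OF v C_const C_const, of 0 0] by simp
  moreover have "rho x v (\<lambda>_. 1) = 0"
    using rho_mult[OF v C_const C_const, of 1 1] by simp
  ultimately show ?thesis
    using rho_linear[OF v C_const C_const, of c 1 0] by simp
qed

lemma rho_add: "v \<in> Efib x \<Longrightarrow> f \<in> C \<Longrightarrow> h \<in> C \<Longrightarrow> rho x v (\<lambda>y. f y + h y) = rho x v f + rho x v h"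
  using rho_linear[of v x f h 1] by simp

lemma rho_scale: "v \<in> Efib x \<Longrightarrow> f \<in> C \<Longrightarrow> rho x v (\<lambda>y. a * f y) = a * rho x v f"
  using rho_linear[of v x f "\<lambda>_. 0" a] rho_const C_const by simp

lemma rho_uminus: "v \<in> Efib x \<Longrightarrow> f \<in> C \<Longrightarrow> rho x v (\<lambda>y. - f y) = - rho x v f"
  using rho_scale[of v x f "-1"] by simp

lemma rho_diff: "v \<in> Efib x \<Longrightarrow> f \<in> C \<Longrightarrow> h \<in> C \<Longrightarrow> rho x v (\<lambda>y. f y - h y) = rho x v f - rho x v h"
  using rho_add[of v x f "\<lambda>y. - h y"] rho_uminus[of v x h] C_uminus by simp

lemma anc_C: "s \<in> Sec \<Longrightarrow> f \<in> C \<Longrightarrow> anc rho s f \<in> C"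
  using lie_algebroid unfolding lie_algebroid_def by (elim conjE) blast

lemma br_Sec: "s1 \<in> Sec \<Longrightarrow> s2 \<in> Sec \<Longrightarrow> br s1 s2 \<in> Sec"
  using lie_algebroid unfolding lie_algebroid_def by (elim conjE) blast

lemma br_linear_left:
  "s1 \<in> Sec \<Longrightarrow> s2 \<in> Sec \<Longrightarrow> s3 \<in> Sec \<Longrightarrow>
   br (\<lambda>x. a *\<^sub>R s1 x + s2 x) s3 = (\<lambda>x. a *\<^sub>R br s1 s3 x + br s2 s3 x)"
  using lie_algebroid unfolding lie_algebroid_def by (elim conjE) blast

lemma br_antisym: assumes "s1 \<in> Sec" "s2 \<in> Sec" shows "br s1 s2 x = - br s2 s1 x"
proof -
  have "br s1 s2 = (\<lambda>x. - br s2 s1 x)"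
    using lie_algebroid assms unfolding lie_algebroid_def by blast
  then show ?thesis by simp
qed

lemma br_jacobi: assumes "s1 \<in> Sec" "s2 \<in> Sec" "s3 \<in> Sec"
  shows "br s1 (br s2 s3) x + br s2 (br s3 s1) x + br s3 (br s1 s2) x = 0"
proof -
  have "(\<lambda>x. br s1 (br s2 s3) x + br s2 (br s3 s1) x + br s3 (br s1 s2) x) = (\<lambda>_. 0)"
    using lie_algebroid assms unfolding lie_algebroid_def by blast
  then show ?thesis by (rule fun_cong)
qed

lemma br_smul_right: assumes "s1 \<in> Sec" "s2 \<in> Sec" "f \<in> C"
  shows "br s1 (smul f s2) x = f x *\<^sub>R br s1 s2 x + anc rho s1 f x *\<^sub>R s2 x"
proof -
  have "br s1 (smul f s2) = (\<lambda>x. f x *\<^sub>R br s1 s2 x + anc rho s1 f x *\<^sub>R s2 x)"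
    using lie_algebroid assms unfolding lie_algebroid_def by blast
  then show ?thesis by simp
qed

lemma br_zero_left: assumes s: "s \<in> Sec" shows "br (\<lambda>_. 0) s x = 0"
proof -
  have "br (\<lambda>_. 0) s = (\<lambda>x. br (\<lambda>_. 0) s x + br (\<lambda>_. 0) s x)"
    using br_linear_left[OF Sec_zero Sec_zero s, of 1] by simp
  then show ?thesis by (metis add_cancel_right_right)
qed

lemma br_scaleR_left: assumes "s1 \<in> Sec" "s2 \<in> Sec"
  shows "br (\<lambda>x. a *\<^sub>R s1 x) s2 x = a *\<^sub>R br s1 s2 x"
  using br_linear_left[OF assms(1) Sec_zero assms(2), of a] br_zero_left[OF assms(2)] by simp

lemma br_add_right: assumes "s1 \<in> Sec" "s2 \<in> Sec" "s3 \<in> Sec"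
  shows "br s1 (\<lambda>x. s2 x + s3 x) x = br s1 s2 x + br s1 s3 x"
  using br_linear_left[OF assms(2,3,1), of 1] br_antisym[OF assms(1) Sec_add[OF assms(2,3)]]
    br_antisym[OF assms(1,2)] br_antisym[OF assms(1,3)] fun_cong[of _ _ x] by force

lemma br_uminus_right: assumes "s1 \<in> Sec" "s2 \<in> Sec"
  shows "br s1 (\<lambda>x. - s2 x) x = - br s1 s2 x"
  using br_scaleR_left[OF assms(2,1), of "-1"] br_antisym[OF assms(1) Sec_uminus[OF assms(2)]]
    br_antisym[OF assms] by simp

text \<open>Expand the Jacobi identity for \<open>s1, s2, f s3\<close> by the Leibniz rule: everything cancels
  against \<open>f\<close> times the Jacobi identity for \<open>s1, s2, s3\<close> except the defect times \<open>s3\<close>.\<close>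
lemma anchor_bracket_defect_scaleR:
  assumes s1: "s1 \<in> Sec" and s2: "s2 \<in> Sec" and s3: "s3 \<in> Sec" and f: "f \<in> C"
  shows "(anc rho s1 (anc rho s2 f) x - anc rho s2 (anc rho s1 f) x - anc rho (br s1 s2) f x)
           *\<^sub>R s3 x = 0"
proof -
  define t where "t = smul f s3"
  have t: "t \<in> Sec" using Sec_smul f s3 t_def by simp
  have f12: "anc rho s1 f \<in> C" "anc rho s2 f \<in> C" using anc_C s1 s2 f by auto
  have S: "smul f (br s2 s3) \<in> Sec" "smul (anc rho s2 f) s3 \<in> Sec"
       "smul f (br s1 s3) \<in> Sec" "smul (anc rho s1 f) s3 \<in> Sec"
    using Sec_smul br_Sec f f12 s1 s2 s3 by auto
  have t1: "br s1 t = (\<lambda>y. smul f (br s1 s3) y + smul (anc rho s1 f) s3 y)"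
    unfolding t_def by (rule ext, subst br_smul_right[OF s1 s3 f], simp add: smul_def)
  have t2: "br s2 t = (\<lambda>y. smul f (br s2 s3) y + smul (anc rho s2 f) s3 y)"
    unfolding t_def by (rule ext, subst br_smul_right[OF s2 s3 f], simp add: smul_def)
  have t_s1: "br t s1 = (\<lambda>y. - br s1 t y)" by (rule ext) (rule br_antisym[OF t s1])
  have A: "br s1 (br s2 t) x = f x *\<^sub>R br s1 (br s2 s3) x + anc rho s1 f x *\<^sub>R br s2 s3 x
      + (anc rho s2 f x *\<^sub>R br s1 s3 x + anc rho s1 (anc rho s2 f) x *\<^sub>R s3 x)"
    unfolding t2 br_add_right[OF s1 S(1,2)] br_smul_right[OF s1 br_Sec[OF s2 s3] f]
      br_smul_right[OF s1 s3 f12(2)] ..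
  have B: "br s2 (br t s1) x = - (f x *\<^sub>R br s2 (br s1 s3) x + anc rho s2 f x *\<^sub>R br s1 s3 x
      + (anc rho s1 f x *\<^sub>R br s2 s3 x + anc rho s2 (anc rho s1 f) x *\<^sub>R s3 x))"
    unfolding t_s1 br_uminus_right[OF s2 br_Sec[OF s1 t]] unfolding t1 br_add_right[OF s2 S(3,4)]
      br_smul_right[OF s2 br_Sec[OF s1 s3] f] br_smul_right[OF s2 s3 f12(1)] ..
  have D: "br t (br s1 s2) x = - (f x *\<^sub>R br (br s1 s2) s3 x + anc rho (br s1 s2) f x *\<^sub>R s3 x)"
    unfolding br_antisym[OF t br_Sec[OF s1 s2]] unfolding t_def br_smul_right[OF br_Sec[OF s1 s2] s3 f] ..
  have s3_s1: "br s3 s1 = (\<lambda>y. - br s1 s3 y)" by (rule ext) (rule br_antisym[OF s3 s1])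
  have jacobi_s3: "br s1 (br s2 s3) x - br s2 (br s1 s3) x - br (br s1 s2) s3 x = 0"
    using br_jacobi[OF s1 s2 s3, of x] br_uminus_right[OF s2 br_Sec[OF s1 s3], of x]
      br_antisym[OF s3 br_Sec[OF s1 s2], of x] unfolding s3_s1 by simp
  have "(anc rho s1 (anc rho s2 f) x - anc rho s2 (anc rho s1 f) x - anc rho (br s1 s2) f x) *\<^sub>R s3 x
     = (br s1 (br s2 t) x + br s2 (br t s1) x + br t (br s1 s2) x)
       - f x *\<^sub>R (br s1 (br s2 s3) x - br s2 (br s1 s3) x - br (br s1 s2) s3 x)"
    unfolding A B D by (simp add: algebra_simps)
  also have "\<dots> = 0" using br_jacobi[OF s1 s2 t] jacobi_s3 by simp
  finally show ?thesis .
qed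

lemma anchor_bracket:
  assumes s1: "s1 \<in> Sec" and s2: "s2 \<in> Sec" and f: "f \<in> C"
  shows "anc rho (br s1 s2) f x = anc rho s1 (anc rho s2 f) x - anc rho s2 (anc rho s1 f) x"
proof (cases "\<exists>v\<in>Efib x. v \<noteq> 0")
  case True
  then obtain s3 where s3: "s3 \<in> Sec" "s3 x \<noteq> 0" using Sec_through by metis
  then show ?thesis using anchor_bracket_defect_scaleR[OF s1 s2 s3(1) f, of x] by simp
next
  case False
  then have "s1 x = 0" "s2 x = 0" "br s1 s2 x = 0"
    using Sec_fibre s1 s2 br_Sec[OF s1 s2] by blast+
  then show ?thesis
    using anc_C[OF s1 f] anc_C[OF s2 f] f by (simp add: anc_apply rho_zero_vector)
qed

lemma lie_dE_eq_zero_of_lie_eta_eq_zero: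
  assumes eta_add: "\<And>x v w. v \<in> Efib x \<Longrightarrow> w \<in> Efib x \<Longrightarrow> eta x (v + w) = eta x v + eta x w"
    and eta_C: "\<And>W. W \<in> Sec \<Longrightarrow> (\<lambda>y. eta y (W y)) \<in> C"
    and s: "s \<in> Sec" and invariant: "\<And>W. W \<in> Sec \<Longrightarrow> lie_eta rho br eta s W = (\<lambda>_. 0)"
    and Y: "Y \<in> Sec" and Z: "Z \<in> Sec"
  shows "anc rho s (dE rho br eta Y Z) x - dE rho br eta (br s Y) Z x - dE rho br eta Y (br s Z) x = 0"
proof -
  let ?e = "\<lambda>W y. eta y (W y)"
  have sY: "br s Y \<in> Sec" and sZ: "br s Z \<in> Sec" and YZ: "br Y Z \<in> Sec"
    using br_Sec s Y Z by auto
  have anc_e: "anc rho s (?e W) = ?e (br s W)" if "W \<in> Sec" for W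
    using fun_cong[OF invariant[OF that]] by (auto simp: lie_eta_def)
  have Z_s: "br Z s = (\<lambda>y. - br s Z y)" by (rule ext) (rule br_antisym[OF Z s])
  have "br s (br Y Z) x = br (br s Y) Z x + br Y (br s Z) x"
    using br_jacobi[OF s Y Z, of x] br_uminus_right[OF Y sZ, of x] br_antisym[OF Z sY, of x]
    unfolding Z_s by (simp add: algebra_simps)
  then have anc_e_YZ: "anc rho s (?e (br Y Z)) x = eta x (br (br s Y) Z x) + eta x (br Y (br s Z) x)"
    using anc_e[OF YZ] eta_add Sec_fibre br_Sec sY sZ Y Z by metis
  have c: "anc rho Y (?e Z) \<in> C" "anc rho Z (?e Y) \<in> C" "?e (br Y Z) \<in> C"
    using anc_C eta_C br_Sec Y Z by auto
  have dE_YZ: "dE rho br eta Y Z = (\<lambda>y. (1/2) * (anc rho Y (?e Z) y - anc rho Z (?e Y) y - ?e (br Y Z) y))"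
    by (rule ext) (simp add: dE_def)
  have "anc rho s (dE rho br eta Y Z) x = (1/2) * (anc rho s (anc rho Y (?e Z)) x
          - anc rho s (anc rho Z (?e Y)) x - anc rho s (?e (br Y Z)) x)"
    unfolding dE_YZ anc_def[of rho s]
    using rho_scale[OF Sec_fibre[OF s] C_diff[OF C_diff[OF c(1,2)] c(3)], where a = "1/2"]
      rho_diff[OF Sec_fibre[OF s] C_diff[OF c(1,2)] c(3)] rho_diff[OF Sec_fibre[OF s] c(1,2)]
    by simp
  moreover have "anc rho s (anc rho Y (?e Z)) x = anc rho (br s Y) (?e Z) x + anc rho Y (?e (br s Z)) x"
    using anchor_bracket[OF s Y eta_C[OF Z], of x] anc_e[OF Z] by simp
  moreover have "anc rho s (anc rho Z (?e Y)) x = anc rho (br s Z) (?e Y) x + anc rho Z (?e (br s Y)) x"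
    using anchor_bracket[OF s Z eta_C[OF Y], of x] anc_e[OF Y] by simp
  ultimately show ?thesis using anc_e_YZ by (simp add: dE_def algebra_simps)
qed

end

locale contact_levi_civita =
  fixes C :: "('m \<Rightarrow> real) set"
    and Efib :: "'m \<Rightarrow> 'v::real_vector set"
    and Sec :: "('m \<Rightarrow> 'v) set"
    and m :: nat
    and rho :: "'m \<Rightarrow> 'v \<Rightarrow> ('m \<Rightarrow> real) \<Rightarrow> real"
    and br :: "('m \<Rightarrow> 'v) \<Rightarrow> ('m \<Rightarrow> 'v) \<Rightarrow> ('m \<Rightarrow> 'v)"
    and F :: "'m \<Rightarrow> 'v \<Rightarrow> 'v" and xi :: "'m \<Rightarrow> 'v"
    and eta :: "'m \<Rightarrow> 'v \<Rightarrow> real" and g :: "'m \<Rightarrow> 'v \<Rightarrow> 'v \<Rightarrow> real"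
    and nabla :: "('m \<Rightarrow> 'v) \<Rightarrow> ('m \<Rightarrow> 'v) \<Rightarrow> ('m \<Rightarrow> 'v)"
  assumes contact: "contact_riemannian C Efib Sec m rho br F xi eta g"
    and levi_civita: "levi_civita C Sec rho br g nabla"

sublocale contact_levi_civita \<subseteq> lie_algebroid_sections C Efib Sec "2*m+1" rho br
  using contact by unfold_locales (simp add: contact_riemannian_def)

sublocale contact_levi_civita \<subseteq> almost_contact_metric_bundle C Efib Sec "2*m+1" F xi eta g
  using contact by unfold_locales (simp add: contact_riemannian_def)

context contact_levi_civita
begin

abbreviation F_on :: "('m \<Rightarrow> 'v) \<Rightarrow> 'm \<Rightarrow> 'v" where
  "F_on s \<equiv> \<lambda>y. F y (s y)"

abbreviation eta_on :: "('m \<Rightarrow> 'v) \<Rightarrow> 'm \<Rightarrow> real" where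
  "eta_on s \<equiv> \<lambda>y. eta y (s y)"

lemma dE_eq_fundamental_form:
  assumes "s1 \<in> Sec" "s2 \<in> Sec" shows "dE rho br eta s1 s2 x = g x (s1 x) (F x (s2 x))"
  using contact assms by (simp add: contact_riemannian_def fundamental_form_def)

lemma nabla_Sec: "s \<in> Sec \<Longrightarrow> s' \<in> Sec \<Longrightarrow> nabla s s' \<in> Sec"
  using levi_civita by (simp add: levi_civita_def E_connection_def)

lemma torsion_free: assumes "s1 \<in> Sec" "s2 \<in> Sec"
  shows "br s1 s2 x = nabla s1 s2 x - nabla s2 s1 x"
  using levi_civita assms by (simp add: levi_civita_def fun_eq_iff)

lemma metric_compatible: assumes "s \<in> Sec" "s1 \<in> Sec" "s2 \<in> Sec"
  shows "anc rho s (\<lambda>y. g y (s1 y) (s2 y)) x = g x (nabla s s1 x) (s2 x) + g x (s1 x) (nabla s s2 x)"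
  using levi_civita assms by (simp add: levi_civita_def)

lemma eta_on_eq_g_xi: "s \<in> Sec \<Longrightarrow> eta_on s = (\<lambda>y. g y (xi y) (s y))"
  by (rule ext) (simp add: g_xi_left Sec_fibre)

lemma lie_eta_xi: assumes s: "s \<in> Sec" shows "lie_eta rho br eta xi s = (\<lambda>_. 0)"
proof
  fix x
  have "dE rho br eta xi s x = 0"
    using dE_eq_fundamental_form[OF xi_Sec s] g_xi_left eta_F F_fibre Sec_fibre[OF s] by simp
  moreover have "anc rho s (eta_on xi) x = 0"
    using eta_xi rho_const[OF Sec_fibre[OF s]] by (simp add: anc_apply)
  ultimately show "lie_eta rho br eta xi s x = 0"
    by (simp add: dE_def lie_eta_def)
qed

lemma lie_eta_F_on: assumes s1: "s1 \<in> Sec" and s2: "s2 \<in> Sec"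
  shows "lie_eta rho br eta (F_on s1) s2 x = 2 * g x (F x (s1 x)) (F x (s2 x))"
proof -
  have "dE rho br eta (F_on s1) s2 x = g x (F x (s1 x)) (F x (s2 x))"
    using dE_eq_fundamental_form[OF F_Sec[OF s1] s2] .
  moreover have "anc rho s2 (eta_on (F_on s1)) x = 0"
    using eta_F[OF Sec_fibre[OF s1]] rho_const[OF Sec_fibre[OF s2]] by (simp add: anc_apply)
  ultimately show ?thesis by (simp add: dE_def lie_eta_def)
qed

lemma N2_eq_zero: assumes s1: "s1 \<in> Sec" and s2: "s2 \<in> Sec"
  shows "N2 rho br F eta s1 s2 = (\<lambda>_. 0)"
  using lie_eta_F_on[OF s1 s2] lie_eta_F_on[OF s2 s1] g_sym F_fibre Sec_fibre s1 s2
  by (simp add: N2_def fun_eq_iff)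

lemma lie_dE_xi: assumes Y: "Y \<in> Sec" and Z: "Z \<in> Sec"
  shows "anc rho xi (dE rho br eta Y Z) x = dE rho br eta (br xi Y) Z x + dE rho br eta Y (br xi Z) x"
  using lie_dE_eq_zero_of_lie_eta_eq_zero[OF eta_add eta_C xi_Sec lie_eta_xi Y Z, of x] by simp

definition nabla_xi_form :: "('m \<Rightarrow> 'v) \<Rightarrow> ('m \<Rightarrow> 'v) \<Rightarrow> 'm \<Rightarrow> real" where
  "nabla_xi_form Y W x = g x (nabla Y xi x) (W x)"

lemma nabla_xi_form_xi: assumes Y: "Y \<in> Sec" shows "nabla_xi_form Y xi x = 0"
proof -
  have "anc rho Y (\<lambda>y. g y (xi y) (xi y)) x = 2 * g x (nabla Y xi x) (xi x)"
    using metric_compatible[OF Y xi_Sec xi_Sec, of x] g_sym[OF xi_fibre Sec_fibre[OF nabla_Sec[OF Y xi_Sec]]]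
    by simp
  moreover have "anc rho Y (\<lambda>y. g y (xi y) (xi y)) x = 0"
    using g_xi_xi rho_const[OF Sec_fibre[OF Y]] by (simp add: anc_apply)
  ultimately show ?thesis by (simp add: nabla_xi_form_def)
qed

lemma nabla_xi_form_antisym: assumes Y: "Y \<in> Sec" and W: "W \<in> Sec"
  shows "nabla_xi_form Y W x - nabla_xi_form W Y x = 2 * g x (Y x) (F x (W x))"
proof -
  have n: "nabla Y W x \<in> Efib x" "nabla W Y x \<in> Efib x" using Sec_fibre nabla_Sec Y W by auto
  have "anc rho Y (eta_on W) x = nabla_xi_form Y W x + eta x (nabla Y W x)"
    unfolding eta_on_eq_g_xi[OF W] metric_compatible[OF Y xi_Sec W] nabla_xi_form_def
    using g_xi_left[OF n(1)] by simp
  moreover have "anc rho W (eta_on Y) x = nabla_xi_form W Y x + eta x (nabla W Y x)"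
    unfolding eta_on_eq_g_xi[OF Y] metric_compatible[OF W xi_Sec Y] nabla_xi_form_def
    using g_xi_left[OF n(2)] by simp
  moreover have "eta x (br Y W x) = eta x (nabla Y W x) - eta x (nabla W Y x)"
    unfolding torsion_free[OF Y W] using eta_diff[OF n] .
  ultimately show ?thesis using dE_eq_fundamental_form[OF Y W, of x] by (simp add: dE_def)
qed

lemma nabla_xi_xi: "nabla xi xi x = 0"
proof (rule g_nondegenerate)
  show "nabla xi xi x \<in> Efib x" using Sec_fibre nabla_Sec xi_Sec by blast
  fix s assume s: "s \<in> Sec"
  have "nabla_xi_form xi s x = 0"
    using nabla_xi_form_antisym[OF xi_Sec s, of x] nabla_xi_form_xi[OF s, of x]
      g_xi_left[OF F_fibre[OF Sec_fibre[OF s]]] eta_F[OF Sec_fibre[OF s]] by simp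
  then show "g x (s x) (nabla xi xi x) = 0"
    using g_sym[OF Sec_fibre[OF s] Sec_fibre[OF nabla_Sec[OF xi_Sec xi_Sec]]]
    by (simp add: nabla_xi_form_def)
qed

lemma nabla_xi_form_F_F: assumes Y: "Y \<in> Sec" and Z: "Z \<in> Sec"
  shows "nabla_xi_form Y (F_on (F_on Z)) x = - nabla_xi_form Y Z x"
proof -
  have n: "nabla Y xi x \<in> Efib x" using Sec_fibre nabla_Sec xi_Sec Y by auto
  have "eta x (nabla Y xi x) = 0"
    using nabla_xi_form_xi[OF Y, of x] g_xi_right[OF n] by (simp add: nabla_xi_form_def)
  then show ?thesis using g_F_F_right[OF n Sec_fibre[OF Z]] by (simp add: nabla_xi_form_def)
qed

lemma g_nabla_F_xi: assumes Y: "Y \<in> Sec" and Z: "Z \<in> Sec"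
  shows "g x (Y x) (nabla_F nabla F xi Z x)
           = g x (Y x) (nabla xi (F_on Z) x) - g x (Y x) (F x (nabla xi Z x))"
  using g_diff_right Sec_fibre nabla_Sec F_fibre xi_Sec F_Sec Y Z by (simp add: nabla_F_def)

text \<open>Invariance of the fundamental form under the flow of \<open>\<xi>\<close>, rewritten with the
  Levi-Civita connection.\<close>
lemma g_nabla_F_xi_eq: assumes Y: "Y \<in> Sec" and Z: "Z \<in> Sec"
  shows "g x (Y x) (nabla_F nabla F xi Z x) = nabla_xi_form Z (F_on Y) x - nabla_xi_form Y (F_on Z) x"
proof -
  have Yx: "Y x \<in> Efib x" and Zx: "Z x \<in> Efib x" using Sec_fibre Y Z by auto
  have n: "nabla xi Y x \<in> Efib x" "nabla Y xi x \<in> Efib x" "nabla xi Z x \<in> Efib x" "nabla Z xi x \<in> Efib x"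
    using Sec_fibre nabla_Sec xi_Sec Y Z by auto
  have dE: "dE rho br eta Y Z = (\<lambda>y. g y (Y y) (F y (Z y)))"
    by (rule ext) (rule dE_eq_fundamental_form[OF Y Z])
  have "anc rho xi (\<lambda>y. g y (Y y) (F y (Z y))) x
      = g x (br xi Y x) (F x (Z x)) + g x (Y x) (F x (br xi Z x))"
    using lie_dE_xi[OF Y Z, of x] unfolding dE dE_eq_fundamental_form[OF br_Sec[OF xi_Sec Y] Z]
      dE_eq_fundamental_form[OF Y br_Sec[OF xi_Sec Z]] .
  moreover have "anc rho xi (\<lambda>y. g y (Y y) (F y (Z y))) x
      = g x (nabla xi Y x) (F x (Z x)) + g x (Y x) (nabla xi (F_on Z) x)"
    using metric_compatible[OF xi_Sec Y F_Sec[OF Z]] by simp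
  moreover have "g x (br xi Y x) (F x (Z x)) = g x (nabla xi Y x) (F x (Z x)) - nabla_xi_form Y (F_on Z) x"
    unfolding torsion_free[OF xi_Sec Y] nabla_xi_form_def using g_diff_left[OF n(1,2) F_fibre[OF Zx]] by simp
  moreover have "g x (Y x) (F x (br xi Z x)) = g x (Y x) (F x (nabla xi Z x)) + nabla_xi_form Z (F_on Y) x"
    unfolding torsion_free[OF xi_Sec Z] nabla_xi_form_def F_diff[OF n(3,4)]
    using g_diff_right[OF F_fibre[OF n(3)] F_fibre[OF n(4)] Yx] g_F_skew[OF Yx n(4)]
      g_sym[OF F_fibre[OF Yx] n(4)] by simp
  ultimately show ?thesis using g_nabla_F_xi[OF Y Z, of x] by simp
qed

lemma anc_xi_eta_on: assumes Z: "Z \<in> Sec" shows "anc rho xi (eta_on Z) x = eta x (nabla xi Z x)"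
  unfolding eta_on_eq_g_xi[OF Z] metric_compatible[OF xi_Sec xi_Sec Z] nabla_xi_xi
  using g_zero_left[OF Sec_fibre[OF Z]] g_xi_left Sec_fibre nabla_Sec xi_Sec Z by simp

text \<open>Differentiate \<open>g(Y, F\<^sup>2Z) = - g(Y, Z) + \<eta>(Y) \<eta>(Z)\<close> along \<open>\<xi>\<close>, using \<open>\<nabla>\<^sub>\<xi>\<xi> = 0\<close>.\<close>
lemma g_nabla_F_xi_F: assumes Y: "Y \<in> Sec" and Z: "Z \<in> Sec"
  shows "g x (Y x) (nabla_F nabla F xi (F_on Z) x) = g x (F x (Y x)) (nabla_F nabla F xi Z x)"
proof -
  have Yx: "Y x \<in> Efib x" and Zx: "Z x \<in> Efib x" using Sec_fibre Y Z by auto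
  have FZ: "F_on Z \<in> Sec" and FFZ: "F_on (F_on Z) \<in> Sec" and FY: "F_on Y \<in> Sec" using F_Sec Y Z by auto
  have n: "nabla xi Y x \<in> Efib x" "nabla xi Z x \<in> Efib x" "nabla xi (F_on Z) x \<in> Efib x"
    using Sec_fibre nabla_Sec xi_Sec Y Z FZ by auto
  have FF: "(\<lambda>y. g y (Y y) (F y (F y (Z y)))) = (\<lambda>y. - g y (Y y) (Z y) + eta_on Y y * eta_on Z y)"
    by (rule ext) (simp add: g_F_F_right Sec_fibre Y Z)
  have c: "(\<lambda>y. g y (Y y) (Z y)) \<in> C" "eta_on Y \<in> C" "eta_on Z \<in> C" using g_C eta_C Y Z by auto
  have "anc rho xi (\<lambda>y. g y (Y y) (F y (F y (Z y)))) x
     = - anc rho xi (\<lambda>y. g y (Y y) (Z y)) x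
       + (eta x (Y x) * anc rho xi (eta_on Z) x + eta x (Z x) * anc rho xi (eta_on Y) x)"
    unfolding FF anc_def[of rho xi]
    using rho_add[OF xi_fibre C_uminus[OF c(1)] C_mult[OF c(2,3)]] rho_uminus[OF xi_fibre c(1)]
      rho_mult[OF xi_fibre c(2,3)] by simp
  moreover have "anc rho xi (\<lambda>y. g y (Y y) (F y (F y (Z y)))) x
      = g x (nabla xi Y x) (F x (F x (Z x))) + g x (Y x) (nabla xi (F_on (F_on Z)) x)"
    using metric_compatible[OF xi_Sec Y FFZ] by simp
  moreover have "anc rho xi (\<lambda>y. g y (Y y) (Z y)) x = g x (nabla xi Y x) (Z x) + g x (Y x) (nabla xi Z x)"
    using metric_compatible[OF xi_Sec Y Z] .
  ultimately show ?thesis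
    using g_nabla_F_xi[OF Y FZ, of x] g_nabla_F_xi[OF FY Z, of x] g_F_F_right[OF n(1) Zx]
      g_F_skew[OF Yx n(3)] g_F_F[OF Yx n(2)] anc_xi_eta_on[OF Y, of x] anc_xi_eta_on[OF Z, of x]
    by simp
qed

lemma nabla_xi_form_symmetric_part_F: assumes Y: "Y \<in> Sec" and Z: "Z \<in> Sec"
  shows "nabla_xi_form Y Z x + nabla_xi_form Z Y x
           = - (nabla_xi_form (F_on Y) (F_on Z) x + nabla_xi_form (F_on Z) (F_on Y) x)"
  using g_nabla_F_xi_F[OF Y Z, of x] g_nabla_F_xi_eq[OF Y F_Sec[OF Z], of x]
    g_nabla_F_xi_eq[OF F_Sec[OF Y] Z, of x] nabla_xi_form_F_F[OF Y Z, of x]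
    nabla_xi_form_F_F[OF Z Y, of x] by simp

lemma nabla_xi_form_F_shift: assumes Y: "Y \<in> Sec" and Z: "Z \<in> Sec"
  shows "nabla_xi_form Y (F_on Z) x - nabla_xi_form (F_on Y) Z x
           = - 2 * (g x (Y x) (Z x) - eta x (Y x) * eta x (Z x))"
proof -
  have Yx: "Y x \<in> Efib x" and Zx: "Z x \<in> Efib x" using Sec_fibre Y Z by auto
  have FZ: "F_on Z \<in> Sec" and FFZ: "F_on (F_on Z) \<in> Sec" and FY: "F_on Y \<in> Sec"
    using F_Sec Y Z by auto
  have "nabla_xi_form (F_on (F_on Z)) (F_on Y) x - nabla_xi_form (F_on Y) (F_on (F_on Z)) x
          = 2 * (g x (Z x) (Y x) - eta x (Z x) * eta x (Y x))"
    using nabla_xi_form_antisym[OF FFZ FY, of x] g_F_F[OF F_fibre[OF Zx] F_fibre[OF Yx]]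
      g_F_F[OF Zx Yx] eta_F[OF Zx] eta_F[OF Yx] by simp
  moreover have "nabla_xi_form Y (F_on Z) x - nabla_xi_form (F_on Z) Y x
          = 2 * (- g x (Y x) (Z x) + eta x (Y x) * eta x (Z x))"
    using nabla_xi_form_antisym[OF Y FZ, of x] g_F_F_right[OF Yx Zx] by simp
  ultimately show ?thesis
    using nabla_xi_form_symmetric_part_F[OF Y FZ, of x] nabla_xi_form_F_F[OF FY Z, of x] g_sym[OF Yx Zx]
    by (simp add: algebra_simps)
qed

theorem nabla_F_xi_eq_zero: assumes Z: "Z \<in> Sec" shows "nabla_F nabla F xi Z = (\<lambda>_. 0)"
proof
  fix x
  show "nabla_F nabla F xi Z x = 0"
  proof (rule g_nondegenerate)
    show "nabla_F nabla F xi Z x \<in> Efib x"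
      using fibre_diff Sec_fibre nabla_Sec F_fibre xi_Sec F_Sec Z by (simp add: nabla_F_def)
    fix Y assume Y: "Y \<in> Sec"
    have Yx: "Y x \<in> Efib x" and Zx: "Z x \<in> Efib x" using Sec_fibre Y Z by auto
    have "nabla_xi_form Z (F_on Y) x - nabla_xi_form (F_on Y) Z x
            = 2 * (- g x (Z x) (Y x) + eta x (Z x) * eta x (Y x))"
      using nabla_xi_form_antisym[OF Z F_Sec[OF Y], of x] g_F_F_right[OF Zx Yx] by simp
    then show "g x (Y x) (nabla_F nabla F xi Z x) = 0"
      using g_nabla_F_xi_eq[OF Y Z, of x] nabla_xi_form_F_shift[OF Y Z, of x] g_sym[OF Yx Zx]
      by (simp add: algebra_simps)
  qed
qed

lemma lie_g_xi_eq: assumes Y: "Y \<in> Sec" and Z: "Z \<in> Sec"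
  shows "lie_g rho br g xi Y Z x = nabla_xi_form Y Z x + nabla_xi_form Z Y x"
proof -
  have Yx: "Y x \<in> Efib x" and Zx: "Z x \<in> Efib x" using Sec_fibre Y Z by auto
  have n: "nabla xi Y x \<in> Efib x" "nabla Y xi x \<in> Efib x" "nabla xi Z x \<in> Efib x" "nabla Z xi x \<in> Efib x"
    using Sec_fibre nabla_Sec xi_Sec Y Z by auto
  show ?thesis
    unfolding lie_g_def metric_compatible[OF xi_Sec Y Z] torsion_free[OF xi_Sec Y]
      torsion_free[OF xi_Sec Z] nabla_xi_form_def
    using g_diff_left[OF n(1,2) Zx] g_diff_right[OF n(3,4) Yx] g_sym[OF Yx n(4)] by simp
qed

lemma nabla_xi_form_F_swap: assumes Y: "Y \<in> Sec" and Z: "Z \<in> Sec"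
  shows "nabla_xi_form (F_on Z) Y x = nabla_xi_form (F_on Y) Z x"
  using nabla_xi_form_antisym[OF Y F_Sec[OF Z], of x] g_F_F_right[OF Sec_fibre[OF Y] Sec_fibre[OF Z]]
    nabla_xi_form_F_shift[OF Y Z, of x] by simp

lemma g_lie_F_xi: assumes Y: "Y \<in> Sec" and Z: "Z \<in> Sec"
  shows "g x (Y x) (lie_F br F xi Z x) = - lie_g rho br g xi (F_on Y) Z x"
proof -
  have Yx: "Y x \<in> Efib x" and Zx: "Z x \<in> Efib x" using Sec_fibre Y Z by auto
  have FZ: "F_on Z \<in> Sec" using F_Sec Z by auto
  have n: "nabla xi (F_on Z) x \<in> Efib x" "nabla (F_on Z) xi x \<in> Efib x"
      "nabla xi Z x \<in> Efib x" "nabla Z xi x \<in> Efib x"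
    using Sec_fibre nabla_Sec xi_Sec FZ Z by auto
  have "g x (Y x) (lie_F br F xi Z x)
      = g x (Y x) (nabla_F nabla F xi Z x) - nabla_xi_form (F_on Z) Y x - nabla_xi_form Z (F_on Y) x"
    unfolding lie_F_def torsion_free[OF xi_Sec FZ] torsion_free[OF xi_Sec Z] F_diff[OF n(3,4)]
      g_nabla_F_xi[OF Y Z] nabla_xi_form_def
    using g_diff_right[OF fibre_diff[OF n(1,2)] fibre_diff[OF F_fibre[OF n(3)] F_fibre[OF n(4)]] Yx]
      g_diff_right[OF n(1,2) Yx] g_diff_right[OF F_fibre[OF n(3)] F_fibre[OF n(4)] Yx]
      g_sym[OF Yx n(2)] g_F_skew[OF Yx n(4)] g_sym[OF F_fibre[OF Yx] n(4)] by simp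
  then show ?thesis
    using nabla_F_xi_eq_zero[OF Z] nabla_xi_form_F_swap[OF Y Z, of x] lie_g_xi_eq[OF F_Sec[OF Y] Z, of x]
      g_zero_right[OF Yx] by simp
qed

lemma lie_g_xi_eq_zero_of_lie_F_xi_eq_zero:
  assumes W: "W \<in> Sec" and Z: "Z \<in> Sec" and invariant: "lie_F br F xi Z = (\<lambda>_. 0)"
  shows "lie_g rho br g xi W Z x = 0"
proof -
  have Wx: "W x \<in> Efib x" and Zx: "Z x \<in> Efib x" using Sec_fibre W Z by auto
  have FW: "F_on W \<in> Sec" and FFW: "F_on (F_on W) \<in> Sec" using F_Sec W by auto
  have "nabla_xi_form (F_on (F_on W)) Z x + nabla_xi_form Z (F_on (F_on W)) x = 0"
    using g_lie_F_xi[OF FW Z, of x] invariant lie_g_xi_eq[OF FFW Z, of x]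
      g_zero_right[OF F_fibre[OF Wx]] by simp
  moreover have "nabla_xi_form (F_on (F_on W)) Z x - nabla_xi_form Z (F_on (F_on W)) x
                   = 2 * g x (F x (W x)) (Z x)"
    using nabla_xi_form_antisym[OF FFW Z, of x] g_F_F[OF F_fibre[OF Wx] Zx] eta_F[OF Wx] by simp
  moreover have "nabla_xi_form W Z x - nabla_xi_form Z W x = - 2 * g x (F x (W x)) (Z x)"
    using nabla_xi_form_antisym[OF W Z, of x] g_F_skew[OF Wx Zx] by simp
  ultimately show ?thesis
    using lie_g_xi_eq[OF W Z, of x] nabla_xi_form_F_F[OF Z W, of x] by simp
qed

theorem N3_eq_zero_iff_killing:
  "(\<forall>s\<in>Sec. N3 br F xi s = (\<lambda>_. 0)) \<longleftrightarrow> (\<forall>s1\<in>Sec. \<forall>s2\<in>Sec. lie_g rho br g xi s1 s2 = (\<lambda>_. 0))"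
proof
  assume "\<forall>s\<in>Sec. N3 br F xi s = (\<lambda>_. 0)"
  then have "lie_F br F xi Z = (\<lambda>_. 0)" if "Z \<in> Sec" for Z
    using that by (simp add: N3_def fun_eq_iff)
  then show "\<forall>s1\<in>Sec. \<forall>s2\<in>Sec. lie_g rho br g xi s1 s2 = (\<lambda>_. 0)"
    using lie_g_xi_eq_zero_of_lie_F_xi_eq_zero by blast
next
  assume killing: "\<forall>s1\<in>Sec. \<forall>s2\<in>Sec. lie_g rho br g xi s1 s2 = (\<lambda>_. 0)"
  have "lie_F br F xi Z x = 0" if Z: "Z \<in> Sec" for Z x
  proof (rule g_nondegenerate)
    show "lie_F br F xi Z x \<in> Efib x"
      using fibre_diff Sec_fibre br_Sec F_fibre xi_Sec F_Sec Z by (simp add: lie_F_def)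
    show "g x (Y x) (lie_F br F xi Z x) = 0" if "Y \<in> Sec" for Y
      using g_lie_F_xi[OF that Z] killing F_Sec[OF that] Z by simp
  qed
  then show "\<forall>s\<in>Sec. N3 br F xi s = (\<lambda>_. 0)" by (simp add: N3_def fun_eq_iff)
qed

end

theorem proposition4p2:
  fixes C :: "('m \<Rightarrow> real) set"
    and Efib :: "'m \<Rightarrow> 'v::real_vector set"
    and Sec :: "('m \<Rightarrow> 'v) set"
    and m :: nat
    and rho :: "'m \<Rightarrow> 'v \<Rightarrow> ('m \<Rightarrow> real) \<Rightarrow> real"
    and br :: "('m \<Rightarrow> 'v) \<Rightarrow> ('m \<Rightarrow> 'v) \<Rightarrow> ('m \<Rightarrow> 'v)"
    and F :: "'m \<Rightarrow> 'v \<Rightarrow> 'v" and xi :: "'m \<Rightarrow> 'v"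
    and eta :: "'m \<Rightarrow> 'v \<Rightarrow> real" and g :: "'m \<Rightarrow> 'v \<Rightarrow> 'v \<Rightarrow> real"
    and nabla :: "('m \<Rightarrow> 'v) \<Rightarrow> ('m \<Rightarrow> 'v) \<Rightarrow> ('m \<Rightarrow> 'v)"
  assumes contact: "contact_riemannian C Efib Sec m rho br F xi eta g"
    and LC: "levi_civita C Sec rho br g nabla"
  shows "((\<forall>s1\<in>Sec. \<forall>s2\<in>Sec. N2 rho br F eta s1 s2 = (\<lambda>_. 0)) \<and>
          (\<forall>s\<in>Sec. N4 rho br eta xi s = (\<lambda>_. 0)))
       \<and> ((\<forall>s\<in>Sec. N3 br F xi s = (\<lambda>_. 0)) \<longleftrightarrow>
          (\<forall>s1\<in>Sec. \<forall>s2\<in>Sec. lie_g rho br g xi s1 s2 = (\<lambda>_. 0)))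
       \<and> (\<forall>s\<in>Sec. nabla_F nabla F xi s = (\<lambda>_. 0))"
proof -
  interpret contact_levi_civita C Efib Sec m rho br F xi eta g nabla
    using contact LC by unfold_locales
  show ?thesis
    using N2_eq_zero lie_eta_xi N3_eq_zero_iff_killing nabla_F_xi_eq_zero
    by (simp add: N4_def)
qed

end
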